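(* Let $\rho \in \mathcal{S}$ and let $\sigma \in \mathcal{P}$ be non-zero. Then \[ D^{\mathbb{P}}(\rho\|\sigma)=\sup_{\omega > 0}\Big(\operatorname{tr}[\rho \log \omega] - \log \operatorname{tr}[\sigma \omega]\Big)=\sup_{\omega > 0}\Big( \operatorname{tr}[\rho \log \omega]+1-\operatorname{tr}[\sigma \omega]\Big), \] where the suprema are over positive definite operators $\omega$ on the $d$-dimensional Hilbert space (all three quantities equal $+\infty$ when the support of $\rho$ is not contained in the support of $\sigma$). Moreover, if $\rho>0$ and $\sigma>0$ (positive definite), both suprema are attained.
   Context: Work on a $d$-dimensional complex Hilbert space ($d\in\mathbb{N}$). $\mathcal{P}$ denotes the set of positive semidefinite operators and $\mathcal{S}\subset\mathcal{P}$ the density operators (unit trace). $\log$ is the natural logarithm. The projectively measured relative entropy is \[ D^{\mathbb{P}}(\rho\|\sigma) := \sup_{ \{ P_i \}_{i=1}^d} \sum_{i=1}^d \operatorname{tr} [P_i \rho] \log \frac{\operatorname{tr} [P_i \rho]}{\operatorname{tr} [P_i \sigma]}, \] the supremum over all families of $d$ mutually orthogonal (rank-one) projectors, with conventions $0\log\frac{0}{q}=0$ and $p\log\frac{p}{0}=+\infty$ for $p>0$. *)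

theory Defs
  imports "HOL-Analysis.Analysis"
begin

text \<open>Operators on a d-dimensional complex Hilbert space are complex d x d matrices,
  indexed by a finite type 'n with d = CARD('n).  The trace is the library's trace.\<close>

definition cadj :: "complex^'n^'n \<Rightarrow> complex^'n^'n" where
  "cadj A = (\<chi> i j. cnj (A $ j $ i))"

definition hermitian_op :: "complex^'n^'n \<Rightarrow> bool" where
  "hermitian_op A \<longleftrightarrow> cadj A = A"

definition qform :: "complex^'n^'n \<Rightarrow> complex^'n \<Rightarrow> complex" where
  "qform A x = (\<Sum>i\<in>UNIV. \<Sum>j\<in>UNIV. cnj (x $ i) * A $ i $ j * x $ j)"

definition psd_op :: "complex^'n^'n \<Rightarrow> bool" where
  "psd_op A \<longleftrightarrow> hermitian_op A \<and> (\<forall>x. 0 \<le> Re (qform A x))"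

definition pd_op :: "complex^'n^'n \<Rightarrow> bool" where
  "pd_op A \<longleftrightarrow> hermitian_op A \<and> (\<forall>x. x \<noteq> 0 \<longrightarrow> 0 < Re (qform A x))"

definition density_op :: "complex^'n^'n \<Rightarrow> bool" where
  "density_op A \<longleftrightarrow> psd_op A \<and> trace A = 1"

definition unitary_op :: "complex^'n^'n \<Rightarrow> bool" where
  "unitary_op U \<longleftrightarrow> U ** cadj U = mat 1 \<and> cadj U ** U = mat 1"

definition cdiag :: "('n \<Rightarrow> real) \<Rightarrow> complex^'n^'n" where
  "cdiag l = (\<chi> i j. if i = j then complex_of_real (l i) else 0)"

definition op_log :: "complex^'n^'n \<Rightarrow> complex^'n^'n" where
  "op_log A = (SOME L. \<exists>U l. unitary_op U \<and> (\<forall>i. 0 < l i) \<and>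
      A = U ** cdiag l ** cadj U \<and> L = U ** cdiag (\<lambda>i. ln (l i)) ** cadj U)"

definition rank_one_proj :: "complex^'n^'n \<Rightarrow> bool" where
  "rank_one_proj P \<longleftrightarrow> (\<exists>v::complex^'n. (\<Sum>i\<in>UNIV. cnj (v $ i) * v $ i) = 1 \<and>
      P = (\<chi> i j. v $ i * cnj (v $ j)))"

definition proj_meas :: "('n \<Rightarrow> complex^'n^'n) \<Rightarrow> bool" where
  "proj_meas P \<longleftrightarrow> (\<forall>i. rank_one_proj (P i)) \<and> (\<forall>i j. i \<noteq> j \<longrightarrow> P i ** P j = 0)"

text \<open>p log(p/q) with conventions 0 log(0/q) = 0 and p log(p/0) = +infinity for p > 0\<close>
definition rel_term :: "real \<Rightarrow> real \<Rightarrow> ereal" where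
  "rel_term p q = (if p = 0 then 0 else if q = 0 then \<infinity> else ereal (p * ln (p / q)))"

definition proj_meas_rel_ent :: "complex^'n^'n \<Rightarrow> complex^'n^'n \<Rightarrow> ereal" where
  "proj_meas_rel_ent \<rho> \<sigma> = (SUP P\<in>{P. proj_meas P}.
      (\<Sum>i\<in>UNIV. rel_term (Re (trace (P i ** \<rho>))) (Re (trace (P i ** \<sigma>)))))"

definition op_support :: "complex^'n^'n \<Rightarrow> (complex^'n) set" where
  "op_support A = range (\<lambda>x. A *v x)"

end

theory Submission
  imports Defs
begin

text \<open>Every projective measurement is given by the columns of a unitary \<open>U\<close>, and by the spectral
  theorem every \<open>\<omega> > 0\<close> is \<open>U diag(\<lambda>) U\<^sup>*\<close> for some unitary \<open>U\<close> and \<open>\<lambda> > 0\<close>. For such \<open>\<omega>\<close>,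
  \<open>tr[\<rho> log \<omega>] = \<Sum>\<^sub>j p\<^sub>j log \<lambda>\<^sub>j\<close> and \<open>tr[\<sigma> \<omega>] = \<Sum>\<^sub>j q\<^sub>j \<lambda>\<^sub>j\<close>, where \<open>p\<close> and \<open>q\<close> are the outcome weights of
  \<open>\<rho>\<close> and \<open>\<sigma>\<close> in the basis \<open>U\<close>. Both quantum suprema therefore split into a supremum over \<open>U\<close> of
  classical suprema over \<open>\<lambda>\<close>, and the theorem reduces to the classical variational formulas
  \<open>\<Sum> p log \<lambda> - log \<Sum> q \<lambda> \<le> D(p\<parallel>q)\<close> (from \<open>ln x \<le> x - 1\<close>) and
  \<open>D(p\<parallel>q) = sup\<^sub>\<lambda> (\<Sum> p log \<lambda> + 1 - \<Sum> q \<lambda>)\<close>, approached by \<open>\<lambda> = p/q\<close>. For \<open>\<rho>, \<sigma> > 0\<close> the supremum over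
  \<open>U\<close> is attained because the unitaries form a compact set on which the classical relative entropy
  is continuous, and then \<open>\<lambda> = p/q\<close> attains both quantum suprema.\<close>

section \<open>The inner product on complex vectors\<close>

definition cinner :: "complex^'n \<Rightarrow> complex^'n \<Rightarrow> complex" where
  "cinner x y = (\<Sum>i\<in>UNIV. cnj (x $ i) * y $ i)"

lemma cinner_add_right: "cinner x (y + z) = cinner x y + cinner x z"
  by (simp add: cinner_def distrib_left sum.distrib)

lemma cinner_add_left: "cinner (x + y) z = cinner x z + cinner y z"
  by (simp add: cinner_def distrib_right sum.distrib)

lemma cinner_diff_right: "cinner x (y - z) = cinner x y - cinner x z"
  by (simp add: cinner_def right_diff_distrib sum_subtractf)

lemma cinner_scale_right: "cinner x (c *s y) = c * cinner x y"
  by (simp add: cinner_def sum_distrib_left algebra_simps)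

lemma cinner_scale_left: "cinner (c *s x) y = cnj c * cinner x y"
  by (simp add: cinner_def sum_distrib_left algebra_simps)

lemma cinner_zero_left [simp]: "cinner 0 x = 0"
  by (simp add: cinner_def)

lemma cnj_cinner: "cnj (cinner x y) = cinner y x"
  by (simp add: cinner_def mult.commute)

lemma Re_cinner_commute: "Re (cinner x y) = Re (cinner y x)"
  by (metis cnj.sel(1) cnj_cinner)

lemma cinner_self: "cinner x x = complex_of_real ((norm x)\<^sup>2)"
proof -
  have "(norm x)\<^sup>2 = (\<Sum>i\<in>UNIV. (norm (x $ i))\<^sup>2)"
    by (simp add: norm_vec_def L2_set_def sum_nonneg)
  then have "complex_of_real ((norm x)\<^sup>2) = (\<Sum>i\<in>UNIV. complex_of_real ((norm (x $ i))\<^sup>2))"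
    by simp
  also have "\<dots> = cinner x x"
    unfolding cinner_def by (metis complex_norm_square mult.commute of_real_power)
  finally show ?thesis ..
qed

lemma Re_cinner_self: "Re (cinner x x) = (norm x)\<^sup>2"
  by (simp add: cinner_self)

lemma cinner_self_eq_0 [simp]: "cinner x x = 0 \<longleftrightarrow> x = 0"
  by (simp add: cinner_self)

lemma cinner_eq_0_iff_inner: "cinner x y = 0 \<longleftrightarrow> x \<bullet> y = 0 \<and> (\<i> *s x) \<bullet> y = 0"
  by (simp add: cinner_def inner_vec_def inner_complex_def complex_eq_iff Re_sum Im_sum)

lemma Re_cinner_self_add_real_scale:
  "Re (cinner (x + complex_of_real t *s y) (x + complex_of_real t *s y)) =
     Re (cinner x x) + 2 * t * Re (cinner y x) + t\<^sup>2 * Re (cinner y y)"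
  using Re_cinner_commute[of x y]
  by (simp add: cinner_add_left cinner_add_right cinner_scale_left cinner_scale_right algebra_simps
      power2_eq_square)

lemma cinner_matrix_vector_mult: "cinner x (A *v y) = cinner (cadj A *v x) y"
proof -
  have "cinner x (A *v y) = (\<Sum>i\<in>UNIV. \<Sum>k\<in>UNIV. cnj (x$i) * A$i$k * y$k)"
    by (simp add: cinner_def matrix_vector_mult_def sum_distrib_left mult.assoc)
  also have "\<dots> = (\<Sum>k\<in>UNIV. \<Sum>i\<in>UNIV. cnj (x$i) * A$i$k * y$k)"
    by (rule sum.swap)
  also have "\<dots> = cinner (cadj A *v x) y"
    by (simp add: cinner_def matrix_vector_mult_def cadj_def sum_distrib_left sum_distrib_right
        mult.commute mult.left_commute)
  finally show ?thesis .
qed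

lemma hermitian_op_cinner: "hermitian_op A \<Longrightarrow> cinner x (A *v y) = cinner (A *v x) y"
  by (simp add: cinner_matrix_vector_mult hermitian_op_def)

lemma qform_eq_cinner: "qform A x = cinner x (A *v x)"
  by (simp add: qform_def cinner_def matrix_vector_mult_def sum_distrib_left mult.assoc)

lemma Re_qform_add_real_scale:
  assumes "hermitian_op A"
  shows "Re (qform A (x + complex_of_real t *s y)) =
           Re (qform A x) + 2 * t * Re (cinner y (A *v x)) + t\<^sup>2 * Re (qform A y)"
proof -
  have "Re (cinner x (A *v y)) = Re (cinner y (A *v x))"
    using hermitian_op_cinner[OF assms, of x y] Re_cinner_commute by metis
  then show ?thesis
    by (simp add: qform_eq_cinner matrix_vector_right_distrib vector_scalar_commute cinner_add_left
        cinner_add_right cinner_scale_left cinner_scale_right algebra_simps power2_eq_square)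
qed

section \<open>Adjoints, unitary and diagonal matrices\<close>

lemma cadj_cadj [simp]: "cadj (cadj A) = A"
  by (simp add: cadj_def vec_eq_iff)

lemma cadj_mult: "cadj (A ** B) = cadj B ** cadj A"
  by (simp add: cadj_def vec_eq_iff matrix_matrix_mult_def mult.commute)

lemma cadj_cdiag [simp]: "cadj (cdiag l) = cdiag l"
  by (simp add: cadj_def cdiag_def vec_eq_iff)

lemma cdiag_one: "cdiag (\<lambda>_. 1) = mat 1"
  by (simp add: cdiag_def mat_def vec_eq_iff)

lemma matrix_mult_cdiag_nth: "(A ** cdiag l) $ i $ j = A $ i $ j * complex_of_real (l j)"
  by (simp add: matrix_matrix_mult_def cdiag_def if_distrib cong: if_cong)

lemma cdiag_matrix_mult_nth: "(cdiag l ** A) $ i $ j = complex_of_real (l i) * A $ i $ j"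
proof -
  have "(cdiag l ** A) $ i $ j = (\<Sum>k\<in>UNIV. if i = k then complex_of_real (l i) * A $ k $ j else 0)"
    unfolding matrix_matrix_mult_def cdiag_def vec_lambda_beta by (rule sum.cong) auto
  then show ?thesis by simp
qed

lemma cdiag_matrix_vector_mult: "cdiag l *v y = (\<chi> j. complex_of_real (l j) * y $ j)"
proof -
  have "(\<Sum>k\<in>UNIV. cdiag l $ j $ k * y $ k) =
          (\<Sum>k\<in>UNIV. if j = k then complex_of_real (l j) * y $ k else 0)" for j
    unfolding cdiag_def vec_lambda_beta by (rule sum.cong) auto
  then show ?thesis by (simp add: vec_eq_iff matrix_vector_mult_def)
qed

lemma matrix_matrix_mult_nth_column: "(A ** U) $ a $ j = (A *v column j U) $ a"
  by (simp add: matrix_matrix_mult_def matrix_vector_mult_def column_def)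

lemma cadj_matrix_vector_mult_nth: "(cadj V *v x) $ j = cinner (column j V) x"
  by (simp add: cadj_def matrix_vector_mult_def cinner_def column_def)

lemma unitary_op_iff_orthonormal_columns:
  "unitary_op U \<longleftrightarrow> (\<forall>i j. cinner (column i U) (column j U) = (if i = j then 1 else 0))"
proof -
  have "cadj U ** U = mat 1 \<longleftrightarrow> (\<forall>i j. cinner (column i U) (column j U) = (if i = j then 1 else 0))"
    by (simp add: vec_eq_iff matrix_matrix_mult_def cadj_def cinner_def column_def mat_def)
  moreover have "cadj U ** U = mat 1 \<Longrightarrow> U ** cadj U = mat 1"
    using matrix_left_right_inverse by blast
  ultimately show ?thesis
    unfolding unitary_op_def by blast
qed

lemma unitary_op_column_unit: "unitary_op U \<Longrightarrow> cinner (column j U) (column j U) = 1"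
  by (simp add: unitary_op_iff_orthonormal_columns)

lemma unitary_op_column_nonzero: "unitary_op U \<Longrightarrow> column j U \<noteq> 0"
  using unitary_op_column_unit[of U j] by auto

lemma unitary_op_mat_1: "unitary_op (mat 1 :: complex^'n^'n)"
proof -
  have "cadj (mat 1 :: complex^'n^'n) = mat 1"
    by (simp add: cadj_def mat_def vec_eq_iff)
  then show ?thesis
    by (simp add: unitary_op_def)
qed

lemma unitary_op_matrix_vector_mult_cadj: "unitary_op U \<Longrightarrow> U *v (cadj U *v x) = x"
  by (simp add: unitary_op_def matrix_vector_mul_assoc)

lemma unitary_op_cadj_matrix_vector_mult: "unitary_op U \<Longrightarrow> cadj U *v (U *v x) = x"
  by (simp add: unitary_op_def matrix_vector_mul_assoc)

lemma unitary_diag_nth: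
  "(U ** cdiag l ** cadj U) $ a $ b = (\<Sum>j\<in>UNIV. U $ a $ j * complex_of_real (l j) * cnj (U $ b $ j))"
  unfolding matrix_matrix_mult_def[of "U ** cdiag l" "cadj U"]
  by (simp add: matrix_mult_cdiag_nth cadj_def)

lemma hermitian_op_unitary_diag: "hermitian_op (U ** cdiag l ** cadj U)"
  by (simp add: hermitian_op_def cadj_mult matrix_mul_assoc)

lemma pd_op_unitary_diag:
  fixes U :: "complex^'n^'n"
  assumes U: "unitary_op U" and l: "\<And>j. 0 < l j"
  shows "pd_op (U ** cdiag l ** cadj U)"
  unfolding pd_op_def
proof (intro conjI allI impI hermitian_op_unitary_diag)
  fix x :: "complex^'n"
  assume "x \<noteq> 0"
  define y where "y = cadj U *v x"
  have "y \<noteq> 0"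
    using \<open>x \<noteq> 0\<close> unitary_op_matrix_vector_mult_cadj[OF U, of x] by (auto simp: y_def)
  then obtain j where j: "y $ j \<noteq> 0"
    by (auto simp: vec_eq_iff)
  have "qform (U ** cdiag l ** cadj U) x = cinner y (cdiag l *v y)"
    by (simp add: qform_eq_cinner y_def cinner_matrix_vector_mult flip: matrix_vector_mul_assoc)
  then have "Re (qform (U ** cdiag l ** cadj U) x) = (\<Sum>k\<in>UNIV. l k * (norm (y $ k))\<^sup>2)"
    unfolding cmod_power2
    by (simp add: cdiag_matrix_vector_mult cinner_def Re_sum algebra_simps power2_eq_square)
  also have "\<dots> > 0"
    using l j by (intro sum_pos2[where i = j]) (auto intro: mult_nonneg_nonneg[OF less_imp_le[OF l]])
  finally show "0 < Re (qform (U ** cdiag l ** cadj U) x)" .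
qed

section \<open>The spectral theorem for Hermitian matrices\<close>

lemma of_real_vector_scalar_mult: "complex_of_real r *s x = r *\<^sub>R x"
  by (simp add: vec_eq_iff) (simp add: scaleR_conv_of_real)

lemma le_quadratic_imp_eq_0:
  fixes c K :: real
  assumes "\<And>t. 2 * t * c \<le> t\<^sup>2 * K"
  shows "c = 0"
proof -
  define s where "s = \<bar>K\<bar> + 1"
  have s: "s > 0"
    by (simp add: s_def)
  have "2 * (c / s) * c \<le> (c / s)\<^sup>2 * K"
    by (rule assms)
  then have "2 * c\<^sup>2 * s \<le> c\<^sup>2 * K"
    using s by (simp add: field_simps power2_eq_square)
  also have "\<dots> \<le> c\<^sup>2 * \<bar>K\<bar>"
    by (simp add: mult_left_mono)
  finally have "c\<^sup>2 * (\<bar>K\<bar> + 2) \<le> 0"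
    by (simp add: s_def algebra_simps power2_eq_square)
  then show ?thesis
    using abs_ge_zero[of K] by (auto simp: mult_le_0_iff)
qed

lemma exists_nonzero_orthogonal:
  fixes F :: "(complex^'n) set"
  assumes fin: "finite F" and card: "card F < CARD('n)"
  shows "\<exists>x. x \<noteq> 0 \<and> (\<forall>v\<in>F. cinner v x = 0)"
proof -
  \<comment> \<open>\<open>cinner v x = 0\<close> amounts to two real orthogonality conditions, against \<open>v\<close> and \<open>\<i> v\<close>.\<close>
  define S where "S = F \<union> (\<lambda>v. \<i> *s v) ` F"
  have "finite S"
    using fin by (simp add: S_def)
  have "card S \<le> 2 * card F"
    unfolding S_def using card_Un_le[of F "(\<lambda>v. \<i> *s v) ` F"] card_image_le[OF fin, of "\<lambda>v. \<i> *s v"]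
    by linarith
  then have "dim S < DIM(complex^'n)"
    using card dim_le_card'[OF \<open>finite S\<close>] by simp
  then obtain x :: "complex^'n" where x: "x \<noteq> 0" "\<And>y. y \<in> span S \<Longrightarrow> orthogonal x y"
    using orthogonal_to_subspace_exists[of S] by blast
  have "cinner v x = 0" if "v \<in> F" for v
  proof -
    have "v \<in> span S" "\<i> *s v \<in> span S"
      using that by (auto simp: S_def intro: span_base)
    then have "x \<bullet> v = 0" "x \<bullet> (\<i> *s v) = 0"
      using x(2) by (auto simp: orthogonal_def)
    then show ?thesis
      unfolding cinner_eq_0_iff_inner by (metis inner_commute)
  qed
  with x show ?thesis
    by blast
qed

lemma hermitian_op_max_qform_eigenvector:
  fixes A :: "complex^'n^'n"
  assumes herm: "hermitian_op A"
    and W_add: "\<And>x y. x \<in> W \<Longrightarrow> y \<in> W \<Longrightarrow> x + y \<in> W"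
    and W_scale: "\<And>c x. x \<in> W \<Longrightarrow> c *s x \<in> W"
    and W_invariant: "\<And>x. x \<in> W \<Longrightarrow> A *v x \<in> W"
    and x0: "x0 \<in> W" "norm x0 = 1"
    and max: "\<And>y. y \<in> W \<Longrightarrow> Re (qform A y) \<le> Re (qform A x0) * (norm y)\<^sup>2"
  shows "A *v x0 = complex_of_real (Re (qform A x0)) *s x0"
proof -
  define M where "M = Re (qform A x0)"
  define w where "w = A *v x0 - complex_of_real M *s x0"
  have "w \<in> W"
    using W_add[OF W_invariant[OF x0(1)] W_scale[OF x0(1), of "- complex_of_real M"]]
    by (simp add: w_def vector_smult_lneg)
  have "2 * t * (norm w)\<^sup>2 \<le> t\<^sup>2 * (M * (norm w)\<^sup>2 - Re (qform A w))" for t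
  proof -
    have "x0 + complex_of_real t *s w \<in> W"
      using x0(1) \<open>w \<in> W\<close> by (intro W_add W_scale)
    then have "Re (qform A (x0 + complex_of_real t *s w)) \<le> M * (norm (x0 + complex_of_real t *s w))\<^sup>2"
      using max by (simp add: M_def)
    moreover have "(norm (x0 + complex_of_real t *s w))\<^sup>2 = 1 + 2 * t * Re (cinner w x0) + t\<^sup>2 * (norm w)\<^sup>2"
      using Re_cinner_self_add_real_scale[of x0 t w] x0(2) by (simp add: Re_cinner_self)
    moreover have "cinner w w = cinner w (A *v x0) - complex_of_real M * cinner w x0"
      by (subst (2) w_def) (simp add: cinner_diff_right cinner_scale_right)
    then have "Re (cinner w (A *v x0)) = (norm w)\<^sup>2 + M * Re (cinner w x0)"
      by (simp flip: Re_cinner_self)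
    ultimately show ?thesis
      by (simp add: Re_qform_add_real_scale[OF herm] M_def algebra_simps power2_eq_square)
  qed
  then have "(norm w)\<^sup>2 = 0"
    by (rule le_quadratic_imp_eq_0)
  then show ?thesis
    by (simp add: w_def M_def)
qed

lemma exists_Rayleigh_maximiser:
  fixes A :: "complex^'n^'n"
  assumes "closed W" and x1: "x1 \<in> W" "x1 \<noteq> 0"
    and W_scale: "\<And>c x. x \<in> W \<Longrightarrow> c *s x \<in> W"
  shows "\<exists>x0\<in>W. norm x0 = 1 \<and> (\<forall>y\<in>W. Re (qform A y) \<le> Re (qform A x0) * (norm y)\<^sup>2)"
proof -
  define f where "f x = Re (qform A x)" for x
  have f_scale: "f (complex_of_real r *s x) = r\<^sup>2 * f x" for r x
    by (simp add: f_def qform_eq_cinner vector_scalar_commute cinner_scale_left cinner_scale_right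
        power2_eq_square)
  have normalise: "complex_of_real (1 / norm x) *s x \<in> sphere 0 1 \<inter> W" if "x \<in> W" "x \<noteq> 0" for x
  proof
    show "complex_of_real (1 / norm x) *s x \<in> W"
      by (rule W_scale[OF that(1)])
    show "complex_of_real (1 / norm x) *s x \<in> sphere 0 1"
      using that(2) by (simp only: of_real_vector_scalar_mult) simp
  qed
  have "compact (sphere 0 1 \<inter> W)"
    using \<open>closed W\<close> by (simp add: compact_Int_closed)
  moreover have "sphere 0 1 \<inter> W \<noteq> {}"
    using normalise[OF x1] by blast
  moreover have "continuous_on (sphere 0 1 \<inter> W) f"
    unfolding f_def qform_def by (intro continuous_intros)
  ultimately obtain x0 where x0: "x0 \<in> sphere 0 1 \<inter> W"
    and x0_max: "\<And>y. y \<in> sphere 0 1 \<inter> W \<Longrightarrow> f y \<le> f x0"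
    using continuous_attains_sup by metis
  have "f y \<le> f x0 * (norm y)\<^sup>2" if "y \<in> W" for y
  proof (cases "y = 0")
    case True
    then show ?thesis
      by (simp add: f_def qform_def)
  next
    case False
    have "(1 / norm y)\<^sup>2 * f y \<le> f x0"
      using x0_max[OF normalise[OF that False]] f_scale[of "1 / norm y" y] by simp
    then show ?thesis
      using False by (simp add: field_simps)
  qed
  with x0 show ?thesis
    unfolding f_def by auto
qed

lemma hermitian_op_eigenvector_orthogonal:
  fixes A :: "complex^'n^'n" and F :: "(complex^'n) set"
  assumes herm: "hermitian_op A" and fin: "finite F" and card: "card F < CARD('n)"
    and eig: "\<forall>v\<in>F. \<exists>c::real. A *v v = complex_of_real c *s v"
  shows "\<exists>x. norm x = 1 \<and> (\<forall>v\<in>F. cinner v x = 0) \<and> (\<exists>c::real. A *v x = complex_of_real c *s x)"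
proof -
  define W where "W = {x::complex^'n. \<forall>v\<in>F. cinner v x = 0}"
  have W_add: "x + y \<in> W" if "x \<in> W" "y \<in> W" for x y
    using that by (simp add: W_def cinner_add_right)
  have W_scale: "c *s x \<in> W" if "x \<in> W" for x c
    using that by (simp add: W_def cinner_scale_right)
  have W_invariant: "A *v x \<in> W" if "x \<in> W" for x
    unfolding W_def
  proof (intro CollectI ballI)
    fix v
    assume "v \<in> F"
    then obtain c :: real where "A *v v = complex_of_real c *s v"
      using eig by blast
    then show "cinner v (A *v x) = 0"
      using that \<open>v \<in> F\<close> by (simp add: hermitian_op_cinner[OF herm] cinner_scale_left W_def)
  qed
  have "closed W"
  proof -
    have "W = (\<Inter>v\<in>F. {x. cinner v x = 0})"
      by (auto simp: W_def)
    moreover have "continuous_on UNIV (cinner v)" for v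
      unfolding cinner_def by (intro continuous_intros)
    ultimately show ?thesis
      by (auto intro!: closed_INT closed_Collect_eq continuous_on_const)
  qed
  moreover obtain x1 where "x1 \<in> W" "x1 \<noteq> 0"
    using exists_nonzero_orthogonal[OF fin card] by (auto simp: W_def)
  ultimately obtain x0 where x0: "x0 \<in> W" "norm x0 = 1"
    and max: "\<And>y. y \<in> W \<Longrightarrow> Re (qform A y) \<le> Re (qform A x0) * (norm y)\<^sup>2"
    using exists_Rayleigh_maximiser[of W x1 A] W_scale by blast
  have "A *v x0 = complex_of_real (Re (qform A x0)) *s x0"
    using herm W_add W_scale W_invariant x0 max by (rule hermitian_op_max_qform_eigenvector)
  then show ?thesis
    using x0 by (auto simp: W_def)
qed

lemma hermitian_op_orthonormal_eigenvectors:
  fixes A :: "complex^'n^'n"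
  assumes herm: "hermitian_op A"
  shows "k \<le> CARD('n) \<Longrightarrow> \<exists>F. finite F \<and> card F = k \<and>
     (\<forall>v\<in>F. \<forall>w\<in>F. cinner v w = (if v = w then 1 else 0)) \<and>
     (\<forall>v\<in>F. \<exists>c::real. A *v v = complex_of_real c *s v)"
proof (induction k)
  case 0
  show ?case
    by (rule exI[of _ "{}"]) simp
next
  case (Suc k)
  then obtain F where F: "finite F" "card F = k" "\<forall>v\<in>F. \<forall>w\<in>F. cinner v w = (if v = w then 1 else 0)"
    "\<forall>v\<in>F. \<exists>c::real. A *v v = complex_of_real c *s v"
    by auto
  obtain x where x: "norm x = 1" "\<forall>v\<in>F. cinner v x = 0" "\<exists>c::real. A *v x = complex_of_real c *s x"
    using hermitian_op_eigenvector_orthogonal[OF herm F(1) _ F(4)] Suc.prems F(2) by auto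
  have xx: "cinner x x = 1"
    using x(1) by (simp add: cinner_self)
  have "\<forall>v\<in>F. cinner x v = 0"
    using x(2) by (metis cnj_cinner complex_cnj_zero)
  moreover have "x \<notin> F"
    using x(2) xx by force
  ultimately show ?case
    using F x xx by (intro exI[of _ "insert x F"]) auto
qed

lemma hermitian_op_spectral:
  fixes A :: "complex^'n^'n"
  assumes herm: "hermitian_op A"
  shows "\<exists>U l. unitary_op U \<and> A = U ** cdiag l ** cadj U \<and>
     (\<forall>j. A *v column j U = complex_of_real (l j) *s column j U)"
proof -
  obtain F where F: "finite F" "card F = CARD('n)"
    "\<forall>v\<in>F. \<forall>w\<in>F. cinner v w = (if v = w then 1 else 0)"
    "\<forall>v\<in>F. \<exists>c::real. A *v v = complex_of_real c *s v"
    using hermitian_op_orthonormal_eigenvectors[OF herm, of "CARD('n)"] by auto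
  obtain e where e: "bij_betw e (UNIV::'n set) F"
    using finite_same_card_bij[OF finite F(1)] F(2) by auto
  have eF: "e j \<in> F" for j
    using e by (auto simp: bij_betw_def)
  define U :: "complex^'n^'n" where "U = (\<chi> a j. e j $ a)"
  have colU: "column j U = e j" for j
    by (simp add: U_def column_def vec_eq_iff)
  have U: "unitary_op U"
    unfolding unitary_op_iff_orthonormal_columns colU
    using F(3) eF e by (auto simp: bij_betw_def inj_def)
  define l where "l j = (SOME c::real. A *v e j = complex_of_real c *s e j)" for j
  have ev: "A *v column j U = complex_of_real (l j) *s column j U" for j
    unfolding colU l_def using F(4) eF by (metis (mono_tags, lifting) someI_ex)
  have "(A ** U) $ a $ j = (U ** cdiag l) $ a $ j" for a j
  proof -
    have "(A ** U) $ a $ j = (complex_of_real (l j) *s column j U) $ a"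
      by (simp only: matrix_matrix_mult_nth_column ev)
    then show ?thesis
      by (simp add: matrix_mult_cdiag_nth column_def mult.commute)
  qed
  then have "A ** U = U ** cdiag l"
    by (simp add: vec_eq_iff)
  then have "A = U ** cdiag l ** cadj U"
    using U by (metis matrix_mul_assoc matrix_mul_rid unitary_op_def)
  with U ev show ?thesis
    by blast
qed

lemma pd_op_spectral:
  fixes W :: "complex^'n^'n"
  assumes W: "pd_op W"
  shows "\<exists>U l. unitary_op U \<and> (\<forall>j. 0 < l j) \<and> W = U ** cdiag l ** cadj U"
proof -
  obtain U l where U: "unitary_op U" and eq: "W = U ** cdiag l ** cadj U"
    and ev: "\<And>j. W *v column j U = complex_of_real (l j) *s column j U"
    using hermitian_op_spectral W by (metis pd_op_def)
  have "0 < l j" for j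
  proof -
    have "qform W (column j U) = complex_of_real (l j)"
      by (simp add: qform_eq_cinner ev cinner_scale_right unitary_op_column_unit[OF U])
    then show ?thesis
      using W unitary_op_column_nonzero[OF U] by (metis pd_op_def Re_complex_of_real)
  qed
  with U eq show ?thesis
    by blast
qed

section \<open>The logarithm of a positive definite matrix\<close>

lemma unitary_diag_eq_imp_fun_eq:
  fixes U V :: "complex^'n^'n"
  assumes U: "unitary_op U" and V: "unitary_op V"
    and eq: "U ** cdiag l ** cadj U = V ** cdiag m ** cadj V"
  shows "U ** cdiag (\<lambda>i. f (l i)) ** cadj U = V ** cdiag (\<lambda>i. f (m i)) ** cadj V"
proof -
  \<comment> \<open>\<open>B = V\<^sup>* U\<close> intertwines \<open>diag l\<close> and \<open>diag m\<close>, so \<open>B\<^sub>i\<^sub>j \<noteq> 0\<close> forces \<open>l\<^sub>j = m\<^sub>i\<close>.\<close>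
  define B where "B = cadj V ** U"
  have UU: "cadj U ** U = mat 1" "U ** cadj U = mat 1"
    using U by (auto simp: unitary_op_def)
  have VV: "cadj V ** V = mat 1" "V ** cadj V = mat 1"
    using V by (auto simp: unitary_op_def)
  have "cadj V ** (U ** cdiag l ** cadj U) ** U = cadj V ** (V ** cdiag m ** cadj V) ** U"
    using eq by simp
  then have BD: "B ** cdiag l = cdiag m ** B"
    unfolding B_def by (simp add: matrix_mul_assoc UU VV)
      (metis UU(1) VV(1) matrix_mul_assoc matrix_mul_lid matrix_mul_rid)
  have "B $ i $ j * complex_of_real (f (l j)) = complex_of_real (f (m i)) * B $ i $ j" for i j
  proof -
    have "B $ i $ j * complex_of_real (l j) = complex_of_real (m i) * B $ i $ j"
      using arg_cong[OF BD, of "\<lambda>M. M $ i $ j"] by (simp add: matrix_mult_cdiag_nth cdiag_matrix_mult_nth)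
    then have "B $ i $ j = 0 \<or> l j = m i"
      by (auto simp: mult.commute)
    then show ?thesis
      by auto
  qed
  then have BDf: "B ** cdiag (\<lambda>i. f (l i)) = cdiag (\<lambda>i. f (m i)) ** B"
    by (simp add: vec_eq_iff matrix_mult_cdiag_nth cdiag_matrix_mult_nth)
  have "U ** cdiag (\<lambda>i. f (l i)) ** cadj U = (V ** cadj V) ** U ** cdiag (\<lambda>i. f (l i)) ** cadj U"
    by (simp add: VV)
  also have "\<dots> = V ** (B ** cdiag (\<lambda>i. f (l i))) ** cadj U"
    unfolding B_def by (simp add: matrix_mul_assoc)
  also have "\<dots> = V ** cdiag (\<lambda>i. f (m i)) ** (B ** cadj U)"
    unfolding BDf by (simp add: matrix_mul_assoc)
  also have "B ** cadj U = cadj V"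
    unfolding B_def by (simp add: UU flip: matrix_mul_assoc)
  finally show ?thesis .
qed

lemma op_log_unitary_diag:
  fixes U :: "complex^'n^'n"
  assumes U: "unitary_op U" and l: "\<And>i. 0 < l i"
  shows "op_log (U ** cdiag l ** cadj U) = U ** cdiag (\<lambda>i. ln (l i)) ** cadj U"
proof -
  let ?A = "U ** cdiag l ** cadj U"
  have "\<exists>L V m. unitary_op V \<and> (\<forall>i. 0 < m i) \<and> ?A = V ** cdiag m ** cadj V \<and>
      L = V ** cdiag (\<lambda>i. ln (m i)) ** cadj V"
    using U l by blast
  then have "\<exists>V m. unitary_op V \<and> (\<forall>i. 0 < m i) \<and> ?A = V ** cdiag m ** cadj V \<and>
      op_log ?A = V ** cdiag (\<lambda>i. ln (m i)) ** cadj V"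
    unfolding op_log_def by (rule someI_ex)
  then obtain V m where V: "unitary_op V" and eq: "?A = V ** cdiag m ** cadj V"
    and L: "op_log ?A = V ** cdiag (\<lambda>i. ln (m i)) ** cadj V"
    by blast
  show ?thesis
    unfolding L using unitary_diag_eq_imp_fun_eq[OF U V eq, of ln] by simp
qed

section \<open>Projective measurements as orthonormal bases\<close>

definition projv :: "complex^'n \<Rightarrow> complex^'n^'n" where
  "projv v = (\<chi> a b. v $ a * cnj (v $ b))"

lemma projv_mult_nth: "(projv v ** projv w) $ a $ b = v $ a * cinner v w * cnj (w $ b)"
  by (simp add: projv_def matrix_matrix_mult_def cinner_def sum_distrib_left sum_distrib_right mult_ac)

lemma trace_projv_mult: "trace (projv v ** R) = qform R v"
proof -
  have "trace (projv v ** R) = (\<Sum>a\<in>UNIV. \<Sum>k\<in>UNIV. cnj (v$k) * R$k$a * v$a)"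
    by (simp add: trace_def projv_def matrix_matrix_mult_def mult.commute mult.left_commute)
  also have "\<dots> = qform R v"
    unfolding qform_def by (rule sum.swap)
  finally show ?thesis .
qed

lemma proj_meas_columns:
  fixes U :: "complex^'n^'n"
  assumes U: "unitary_op U"
  shows "proj_meas (\<lambda>j. projv (column j U))"
  unfolding proj_meas_def
proof (intro conjI allI impI)
  fix i
  show "rank_one_proj (projv (column i U))"
    unfolding rank_one_proj_def
    using unitary_op_column_unit[OF U, of i] by (auto simp: cinner_def projv_def)
next
  fix i j :: 'n
  assume "i \<noteq> j"
  then have "cinner (column i U) (column j U) = 0"
    using U by (simp add: unitary_op_iff_orthonormal_columns)
  then show "projv (column i U) ** projv (column j U) = 0"
    by (simp add: vec_eq_iff projv_mult_nth)
qed

lemma proj_meas_obtain_unitary: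
  fixes P :: "'n \<Rightarrow> complex^'n^'n"
  assumes P: "proj_meas P"
  shows "\<exists>U. unitary_op U \<and> P = (\<lambda>j. projv (column j U))"
proof -
  have "\<forall>j. \<exists>v. cinner v v = 1 \<and> P j = projv v"
    using P unfolding proj_meas_def rank_one_proj_def cinner_def projv_def by blast
  then obtain v where v: "\<And>j. cinner (v j) (v j) = 1" "\<And>j. P j = projv (v j)"
    by metis
  have orth: "cinner (v i) (v j) = 0" if "i \<noteq> j" for i j
  proof -
    have "v i \<noteq> 0" "v j \<noteq> 0"
      using v(1)[of i] v(1)[of j] by auto
    then obtain a b where "v i $ a \<noteq> 0" "v j $ b \<noteq> 0"
      by (auto simp: vec_eq_iff)
    moreover have "(projv (v i) ** projv (v j)) $ a $ b = 0"
      using P that unfolding proj_meas_def v(2) by simp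
    ultimately show ?thesis
      by (simp add: projv_mult_nth)
  qed
  define U :: "complex^'n^'n" where "U = (\<chi> a j. v j $ a)"
  have colU: "column j U = v j" for j
    by (simp add: U_def column_def vec_eq_iff)
  have "unitary_op U"
    unfolding unitary_op_iff_orthonormal_columns colU using v(1) orth by simp
  moreover have "P = (\<lambda>j. projv (column j U))"
    by (simp add: fun_eq_iff colU v(2))
  ultimately show ?thesis
    by blast
qed

text \<open>The weight \<open>tr[P\<^sub>j R]\<close> of outcome \<open>j\<close> when measuring in the basis formed by the columns of \<open>U\<close>.\<close>

definition meas_weight :: "complex^'n^'n \<Rightarrow> complex^'n^'n \<Rightarrow> 'n \<Rightarrow> real" where
  "meas_weight R U j = Re (qform R (column j U))"

lemma proj_meas_rel_ent_eq_SUP_unitary: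
  "proj_meas_rel_ent \<rho> \<sigma> =
     (SUP U\<in>{U. unitary_op U}. \<Sum>j\<in>UNIV. rel_term (meas_weight \<rho> U j) (meas_weight \<sigma> U j))"
proof -
  have meas: "{P. proj_meas P} = (\<lambda>U j. projv (column j U)) ` {U. unitary_op U}"
    using proj_meas_columns proj_meas_obtain_unitary by blast
  show ?thesis
    unfolding proj_meas_rel_ent_def meas image_image by (simp add: trace_projv_mult meas_weight_def)
qed

lemma trace_mult_unitary_diag:
  "trace (R ** (U ** cdiag l ** cadj U)) = (\<Sum>j\<in>UNIV. complex_of_real (l j) * qform R (column j U))"
proof -
  have "trace (R ** (U ** cdiag l ** cadj U)) =
     (\<Sum>a\<in>UNIV. \<Sum>b\<in>UNIV. \<Sum>j\<in>UNIV. complex_of_real (l j) * (cnj (U$a$j) * R$a$b * U$b$j))"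
    by (simp add: trace_def matrix_matrix_mult_def[of R] unitary_diag_nth sum_distrib_left
        mult.commute mult.left_commute)
  also have "\<dots> = (\<Sum>a\<in>UNIV. \<Sum>j\<in>UNIV. \<Sum>b\<in>UNIV. complex_of_real (l j) * (cnj (U$a$j) * R$a$b * U$b$j))"
    by (rule sum.cong[OF refl], rule sum.swap)
  also have "\<dots> = (\<Sum>j\<in>UNIV. \<Sum>a\<in>UNIV. \<Sum>b\<in>UNIV. complex_of_real (l j) * (cnj (U$a$j) * R$a$b * U$b$j))"
    by (rule sum.swap)
  also have "\<dots> = (\<Sum>j\<in>UNIV. complex_of_real (l j) * qform R (column j U))"
    by (simp add: qform_def column_def sum_distrib_left)
  finally show ?thesis .
qed

lemma Re_trace_mult_unitary_diag:
  "Re (trace (R ** (U ** cdiag l ** cadj U))) = (\<Sum>j\<in>UNIV. meas_weight R U j * l j)"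
  by (simp add: trace_mult_unitary_diag Re_sum meas_weight_def mult.commute)

lemma Re_trace_mult_op_log_unitary_diag:
  fixes U :: "complex^'n^'n"
  assumes "unitary_op U" and "\<And>j. 0 < l j"
  shows "Re (trace (R ** op_log (U ** cdiag l ** cadj U))) = (\<Sum>j\<in>UNIV. meas_weight R U j * ln (l j))"
  by (simp add: op_log_unitary_diag assms Re_trace_mult_unitary_diag)

lemma sum_meas_weight:
  fixes U R :: "complex^'n^'n"
  assumes U: "unitary_op U" and R: "trace R = 1"
  shows "(\<Sum>j\<in>UNIV. meas_weight R U j) = 1"
proof -
  have "U ** cdiag (\<lambda>_. 1) ** cadj U = mat 1"
    using U by (simp add: cdiag_one unitary_op_def)
  then show ?thesis
    using Re_trace_mult_unitary_diag[of R U "\<lambda>_. 1"] R by simp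
qed

lemma meas_weight_nonneg: "psd_op R \<Longrightarrow> 0 \<le> meas_weight R U j"
  by (simp add: psd_op_def meas_weight_def)

lemma meas_weight_pos: "pd_op R \<Longrightarrow> unitary_op U \<Longrightarrow> 0 < meas_weight R U j"
  by (simp add: pd_op_def meas_weight_def unitary_op_column_nonzero)

lemma meas_weight_eigenbasis:
  assumes "unitary_op U" and "A *v column j U = complex_of_real (l j) *s column j U"
  shows "meas_weight A U j = l j"
  using assms by (simp add: meas_weight_def qform_eq_cinner cinner_scale_right unitary_op_column_unit)

lemma psd_op_qform_eq_0_imp_kernel:
  assumes R: "psd_op R" and v: "Re (qform R v) = 0"
  shows "R *v v = 0"
proof -
  have herm: "hermitian_op R"
    using R by (simp add: psd_op_def)
  have "2 * t * - (norm (R *v v))\<^sup>2 \<le> t\<^sup>2 * Re (qform R (R *v v))" for t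
  proof -
    have "0 \<le> Re (qform R (v + complex_of_real t *s (R *v v)))"
      using R by (simp add: psd_op_def)
    then show ?thesis
      using v by (simp add: Re_qform_add_real_scale[OF herm] Re_cinner_self)
  qed
  then have "- (norm (R *v v))\<^sup>2 = 0"
    by (rule le_quadratic_imp_eq_0)
  then show ?thesis
    by simp
qed

lemma sum_meas_weight_mult_pos:
  fixes U S :: "complex^'n^'n"
  assumes S: "psd_op S" "S \<noteq> 0" and U: "unitary_op U" and l: "\<And>j. 0 < l j"
  shows "0 < (\<Sum>j\<in>UNIV. meas_weight S U j * l j)"
proof (rule ccontr)
  assume "\<not> ?thesis"
  moreover have nonneg: "\<forall>j\<in>UNIV. 0 \<le> meas_weight S U j * l j"
    using l meas_weight_nonneg[OF S(1)] by (simp add: less_imp_le)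
  moreover have "0 \<le> (\<Sum>j\<in>UNIV. meas_weight S U j * l j)"
    using nonneg by (simp add: sum_nonneg)
  ultimately have "(\<Sum>j\<in>UNIV. meas_weight S U j * l j) = 0"
    by simp
  then have "\<forall>j. meas_weight S U j = 0 \<or> l j = 0"
    using sum_nonneg_eq_0_iff[of UNIV "\<lambda>j. meas_weight S U j * l j"] nonneg by simp
  then have "S *v column j U = 0" for j
    using l[of j] by (intro psd_op_qform_eq_0_imp_kernel[OF S(1)]) (auto simp: meas_weight_def)
  then have "S ** U = 0"
    by (simp add: vec_eq_iff matrix_matrix_mult_nth_column)
  moreover have "(0::complex^'n^'n) ** cadj U = 0"
    by (simp add: matrix_matrix_mult_def vec_eq_iff)
  ultimately have "S = 0"
    using U by (metis matrix_mul_assoc matrix_mul_rid unitary_op_def)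
  with S(2) show False
    by simp
qed

lemma Re_trace_mult_pd_op_pos:
  fixes \<sigma> \<omega> :: "complex^'n^'n"
  assumes "psd_op \<sigma>" "\<sigma> \<noteq> 0" "pd_op \<omega>"
  shows "0 < Re (trace (\<sigma> ** \<omega>))"
  using pd_op_spectral[OF assms(3)] sum_meas_weight_mult_pos[OF assms(1,2)]
  by (auto simp: Re_trace_mult_unitary_diag)

section \<open>Classical variational formulas for the relative entropy\<close>

lemma sum_rel_term_eq_infinity:
  fixes p q :: "'n::finite \<Rightarrow> real"
  assumes "p i \<noteq> 0" "q i = 0"
  shows "(\<Sum>j\<in>UNIV. rel_term (p j) (q j)) = \<infinity>"
  using assms by (subst sum_Pinfty) (auto simp: rel_term_def)

lemma sum_rel_term_eq_ereal:
  fixes p q :: "'n::finite \<Rightarrow> real"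
  assumes "\<And>j. p j \<noteq> 0 \<Longrightarrow> q j \<noteq> 0"
  shows "(\<Sum>j\<in>UNIV. rel_term (p j) (q j)) =
           ereal (\<Sum>j\<in>UNIV. if p j = 0 then 0 else p j * ln (p j / q j))"
proof -
  have "(\<Sum>j\<in>UNIV. rel_term (p j) (q j)) =
          (\<Sum>j\<in>UNIV. ereal (if p j = 0 then 0 else p j * ln (p j / q j)))"
    by (rule sum.cong) (use assms in \<open>auto simp: rel_term_def\<close>)
  then show ?thesis
    by simp
qed

lemma mult_ln_div_le:
  fixes p a :: real
  assumes "0 < p" "0 < a"
  shows "p * ln (a / p) \<le> a - p"
proof -
  have "p * ln (a / p) \<le> p * (a / p - 1)"
    using assms ln_le_minus_one[of "a / p"] by (simp add: mult_left_mono)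
  also have "\<dots> = a - p"
    using assms by (simp add: field_simps)
  finally show ?thesis .
qed

lemma log_variational_le_sum_rel_term:
  fixes p q lam :: "'n::finite \<Rightarrow> real"
  assumes p0: "\<And>j. 0 \<le> p j" and q0: "\<And>j. 0 \<le> q j" and p1: "(\<Sum>j\<in>UNIV. p j) = 1"
    and lam: "\<And>j. 0 < lam j" and T: "0 < (\<Sum>j\<in>UNIV. q j * lam j)"
  shows "ereal ((\<Sum>j\<in>UNIV. p j * ln (lam j)) - ln (\<Sum>j\<in>UNIV. q j * lam j)) \<le> (\<Sum>j\<in>UNIV. rel_term (p j) (q j))"
proof (cases "\<exists>i. p i \<noteq> 0 \<and> q i = 0")
  case True
  then show ?thesis
    by (metis sum_rel_term_eq_infinity ereal_less_eq(1))
next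
  case False
  then have nz: "\<And>j. p j \<noteq> 0 \<Longrightarrow> q j \<noteq> 0"
    by blast
  define T where "T = (\<Sum>j\<in>UNIV. q j * lam j)"
  define g where "g j = (if p j = 0 then 0 else p j * ln (p j / q j))" for j
  have term_le: "p j * ln (lam j) - p j * ln T - g j \<le> q j * lam j / T - p j" for j
  proof (cases "p j = 0")
    case True
    then show ?thesis
      using q0[of j] lam[of j] T by (simp add: g_def T_def)
  next
    case False
    then have "0 < p j" "0 < q j"
      using p0[of j] q0[of j] nz[of j] by auto
    moreover have "0 < T"
      using T by (simp add: T_def)
    ultimately have "p j * ln (lam j) - p j * ln T - g j = p j * ln (q j * lam j / T / p j)"
      using False lam[of j] by (simp add: g_def ln_div ln_mult algebra_simps)
    also have "\<dots> \<le> q j * lam j / T - p j"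
      using \<open>0 < p j\<close> \<open>0 < q j\<close> \<open>0 < T\<close> lam[of j] by (intro mult_ln_div_le) auto
    finally show ?thesis .
  qed
  have "(\<Sum>j\<in>UNIV. p j * ln (lam j) - p j * ln T - g j) \<le> (\<Sum>j\<in>UNIV. q j * lam j / T - p j)"
    by (rule sum_mono) (rule term_le)
  also have "\<dots> = 0"
    using T by (simp add: sum_subtractf sum_divide_distrib[symmetric] T_def p1)
  finally have "(\<Sum>j\<in>UNIV. p j * ln (lam j)) - ln T \<le> (\<Sum>j\<in>UNIV. g j)"
    by (simp add: sum_subtractf sum_distrib_right[symmetric] p1)
  then show ?thesis
    using sum_rel_term_eq_ereal[of p q, OF nz] by (simp add: g_def T_def)
qed

lemma SUP_linear_variational_eq_infinity:
  fixes p q :: "'n::finite \<Rightarrow> real"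
  assumes "0 < p i" "q i = 0"
  shows "(SUP \<mu>\<in>{\<mu>. \<forall>j. 0 < \<mu> j}. ereal ((\<Sum>j\<in>UNIV. p j * ln (\<mu> j)) + 1 - (\<Sum>j\<in>UNIV. q j * \<mu> j))) = \<infinity>"
    (is "?S = \<infinity>")
proof (rule ereal_top)
  fix B :: real
  \<comment> \<open>Raise \<open>\<mu>\<close> only at \<open>i\<close>, where it costs nothing.\<close>
  define \<mu> where "\<mu> = (\<lambda>j. if j = i then exp ((B + (\<Sum>k\<in>UNIV. q k)) / p i) else 1)"
  have "(\<Sum>j\<in>UNIV. p j * ln (\<mu> j)) = (\<Sum>j\<in>UNIV. if j = i then B + (\<Sum>k\<in>UNIV. q k) else 0)"
    using assms(1) by (intro sum.cong) (auto simp: \<mu>_def)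
  moreover have "(\<Sum>j\<in>UNIV. q j * \<mu> j) = (\<Sum>j\<in>UNIV. q j)"
    using assms(2) by (intro sum.cong) (auto simp: \<mu>_def)
  ultimately have "ereal B \<le> ereal ((\<Sum>j\<in>UNIV. p j * ln (\<mu> j)) + 1 - (\<Sum>j\<in>UNIV. q j * \<mu> j))"
    by simp
  also have "\<dots> \<le> ?S"
    by (rule SUP_upper) (simp add: \<mu>_def)
  finally show "ereal B \<le> ?S" .
qed

lemma linear_variational_approx_rel_ent:
  fixes p q :: "'n::finite \<Rightarrow> real"
  assumes p0: "\<And>j. 0 \<le> p j" and q0: "\<And>j. 0 \<le> q j" and p1: "(\<Sum>j\<in>UNIV. p j) = 1"
    and nz: "\<And>j. p j \<noteq> 0 \<Longrightarrow> q j \<noteq> 0" and "0 < e"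
  obtains \<mu> where "\<forall>j. 0 < \<mu> j"
    and "(\<Sum>j\<in>UNIV. if p j = 0 then 0 else p j * ln (p j / q j))
           \<le> (\<Sum>j\<in>UNIV. p j * ln (\<mu> j)) + 1 - (\<Sum>j\<in>UNIV. q j * \<mu> j) + e"
proof -
  \<comment> \<open>\<open>\<mu> = p/q\<close> off the zeros of \<open>p\<close>; there any small \<open>d > 0\<close> will do.\<close>
  define Q where "Q = (\<Sum>j\<in>UNIV. q j)"
  have "Q \<ge> 0"
    unfolding Q_def by (rule sum_nonneg) (use q0 in auto)
  define d where "d = e / (Q + 1)"
  have "d > 0" "d * Q \<le> e"
    using \<open>0 < e\<close> \<open>Q \<ge> 0\<close> by (auto simp: d_def field_simps)
  define \<mu> where "\<mu> = (\<lambda>j. if p j = 0 then d else p j / q j)"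
  have "\<forall>j. 0 < \<mu> j"
    using \<open>d > 0\<close> nz p0 q0 by (auto simp: \<mu>_def less_le)
  moreover have "(\<Sum>j\<in>UNIV. p j * ln (\<mu> j)) = (\<Sum>j\<in>UNIV. if p j = 0 then 0 else p j * ln (p j / q j))"
    by (rule sum.cong) (auto simp: \<mu>_def)
  moreover have "(\<Sum>j\<in>UNIV. q j * \<mu> j) \<le> (\<Sum>j\<in>UNIV. p j + d * q j)"
    using nz p0 q0 \<open>d > 0\<close> by (intro sum_mono) (auto simp: \<mu>_def mult.commute)
  moreover have "(\<Sum>j\<in>UNIV. p j + d * q j) = 1 + d * Q"
    by (simp add: sum.distrib p1 Q_def sum_distrib_left)
  ultimately show ?thesis
    using \<open>d * Q \<le> e\<close> that by fastforce
qed

lemma sum_rel_term_le_SUP_linear_variational: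
  fixes p q :: "'n::finite \<Rightarrow> real"
  assumes p0: "\<And>j. 0 \<le> p j" and q0: "\<And>j. 0 \<le> q j" and p1: "(\<Sum>j\<in>UNIV. p j) = 1"
  shows "(\<Sum>j\<in>UNIV. rel_term (p j) (q j)) \<le>
     (SUP \<mu>\<in>{\<mu>. \<forall>j. 0 < \<mu> j}. ereal ((\<Sum>j\<in>UNIV. p j * ln (\<mu> j)) + 1 - (\<Sum>j\<in>UNIV. q j * \<mu> j)))"
    (is "_ \<le> ?S")
proof (cases "\<exists>i. p i \<noteq> 0 \<and> q i = 0")
  case True
  then obtain i where "0 < p i" "q i = 0"
    using p0 by (metis less_eq_real_def)
  then show ?thesis
    by (simp add: SUP_linear_variational_eq_infinity)
next
  case False
  then have nz: "\<And>j. p j \<noteq> 0 \<Longrightarrow> q j \<noteq> 0"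
    by blast
  have "ereal (\<Sum>j\<in>UNIV. if p j = 0 then 0 else p j * ln (p j / q j)) \<le> ?S"
  proof (rule ereal_le_epsilon2)
    fix e :: real
    assume "0 < e"
    then obtain \<mu> where \<mu>: "\<mu> \<in> {\<mu>. \<forall>j. 0 < \<mu> j}"
      and le: "(\<Sum>j\<in>UNIV. if p j = 0 then 0 else p j * ln (p j / q j))
                 \<le> (\<Sum>j\<in>UNIV. p j * ln (\<mu> j)) + 1 - (\<Sum>j\<in>UNIV. q j * \<mu> j) + e"
      using linear_variational_approx_rel_ent[of p q, OF p0 q0 p1 nz \<open>0 < e\<close>] by auto
    have "ereal (\<Sum>j\<in>UNIV. if p j = 0 then 0 else p j * ln (p j / q j))
        \<le> ereal ((\<Sum>j\<in>UNIV. p j * ln (\<mu> j)) + 1 - (\<Sum>j\<in>UNIV. q j * \<mu> j)) + ereal e"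
      using le by simp
    also have "\<dots> \<le> ?S + ereal e"
      by (intro add_right_mono SUP_upper[OF \<mu>])
    finally show "ereal (\<Sum>j\<in>UNIV. if p j = 0 then 0 else p j * ln (p j / q j)) \<le> ?S + ereal e" .
  qed
  then show ?thesis
    using sum_rel_term_eq_ereal[of p q, OF nz] by simp
qed

section \<open>The variational formulas for the measured relative entropy\<close>

lemma log_variational_le_proj_meas_rel_ent:
  fixes \<rho> \<sigma> \<omega> :: "complex^'n^'n"
  assumes \<rho>: "density_op \<rho>" and \<sigma>: "psd_op \<sigma>" "\<sigma> \<noteq> 0" and \<omega>: "pd_op \<omega>"
  shows "ereal (Re (trace (\<rho> ** op_log \<omega>)) - ln (Re (trace (\<sigma> ** \<omega>)))) \<le> proj_meas_rel_ent \<rho> \<sigma>"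
proof -
  obtain U l where U: "unitary_op U" and l: "\<And>j. 0 < l j" and \<omega>_eq: "\<omega> = U ** cdiag l ** cadj U"
    using pd_op_spectral[OF \<omega>] by blast
  have "ereal ((\<Sum>j\<in>UNIV. meas_weight \<rho> U j * ln (l j)) - ln (\<Sum>j\<in>UNIV. meas_weight \<sigma> U j * l j))
     \<le> (\<Sum>j\<in>UNIV. rel_term (meas_weight \<rho> U j) (meas_weight \<sigma> U j))"
    using \<rho> \<sigma> U l
    by (intro log_variational_le_sum_rel_term sum_meas_weight_mult_pos)
      (auto simp: density_op_def meas_weight_nonneg sum_meas_weight)
  also have "\<dots> \<le> proj_meas_rel_ent \<rho> \<sigma>"
    unfolding proj_meas_rel_ent_eq_SUP_unitary by (rule SUP_upper) (simp add: U)
  finally show ?thesis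
    unfolding \<omega>_eq Re_trace_mult_op_log_unitary_diag[OF U l] Re_trace_mult_unitary_diag .
qed

lemma proj_meas_rel_ent_le_linear_variational:
  fixes \<rho> \<sigma> :: "complex^'n^'n"
  assumes \<rho>: "density_op \<rho>" and \<sigma>: "psd_op \<sigma>"
  shows "proj_meas_rel_ent \<rho> \<sigma> \<le>
    (SUP \<omega>\<in>{\<omega>. pd_op \<omega>}. ereal (Re (trace (\<rho> ** op_log \<omega>)) + 1 - Re (trace (\<sigma> ** \<omega>))))"
    (is "_ \<le> ?S")
  unfolding proj_meas_rel_ent_eq_SUP_unitary
proof (rule SUP_least)
  fix U :: "complex^'n^'n"
  assume "U \<in> {U. unitary_op U}"
  then have U: "unitary_op U"
    by simp
  have "(\<Sum>j\<in>UNIV. rel_term (meas_weight \<rho> U j) (meas_weight \<sigma> U j)) \<le>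
     (SUP \<mu>\<in>{\<mu>. \<forall>j. 0 < \<mu> j}. ereal ((\<Sum>j\<in>UNIV. meas_weight \<rho> U j * ln (\<mu> j)) + 1 -
                                        (\<Sum>j\<in>UNIV. meas_weight \<sigma> U j * \<mu> j)))"
    using \<rho> \<sigma> U
    by (intro sum_rel_term_le_SUP_linear_variational) (auto simp: density_op_def meas_weight_nonneg sum_meas_weight)
  also have "\<dots> \<le> ?S"
  proof (rule SUP_least)
    fix \<mu> :: "'n \<Rightarrow> real"
    assume "\<mu> \<in> {\<mu>. \<forall>j. 0 < \<mu> j}"
    then have \<mu>: "\<And>j. 0 < \<mu> j"
      by simp
    have "U ** cdiag \<mu> ** cadj U \<in> {\<omega>. pd_op \<omega>}"
      using pd_op_unitary_diag[OF U \<mu>] by simp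
    from SUP_upper[OF this, of "\<lambda>\<omega>. ereal (Re (trace (\<rho> ** op_log \<omega>)) + 1 - Re (trace (\<sigma> ** \<omega>)))"]
    show "ereal ((\<Sum>j\<in>UNIV. meas_weight \<rho> U j * ln (\<mu> j)) + 1 - (\<Sum>j\<in>UNIV. meas_weight \<sigma> U j * \<mu> j)) \<le> ?S"
      unfolding Re_trace_mult_op_log_unitary_diag[OF U \<mu>] Re_trace_mult_unitary_diag .
  qed
  finally show "(\<Sum>j\<in>UNIV. rel_term (meas_weight \<rho> U j) (meas_weight \<sigma> U j)) \<le> ?S" .
qed

lemma support_subset_if_proj_meas_rel_ent_finite:
  fixes \<rho> \<sigma> :: "complex^'n^'n"
  assumes \<rho>: "psd_op \<rho>" and \<sigma>: "psd_op \<sigma>" and finite: "proj_meas_rel_ent \<rho> \<sigma> \<noteq> \<infinity>"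
  shows "op_support \<rho> \<subseteq> op_support \<sigma>"
proof
  \<comment> \<open>Measure in an eigenbasis of \<open>\<sigma>\<close>: finiteness kills \<open>\<rho>\<close> on the kernel of \<open>\<sigma>\<close>.\<close>
  obtain V m where V: "unitary_op V" and \<sigma>_eq: "\<sigma> = V ** cdiag m ** cadj V"
    and ev: "\<And>j. \<sigma> *v column j V = complex_of_real (m j) *s column j V"
    using hermitian_op_spectral \<sigma> by (metis psd_op_def)
  have "(\<Sum>j\<in>UNIV. rel_term (meas_weight \<rho> V j) (meas_weight \<sigma> V j)) \<le> proj_meas_rel_ent \<rho> \<sigma>"
    unfolding proj_meas_rel_ent_eq_SUP_unitary by (rule SUP_upper) (simp add: V)
  then have "(\<Sum>j\<in>UNIV. rel_term (meas_weight \<rho> V j) (meas_weight \<sigma> V j)) \<noteq> \<infinity>"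
    using finite by auto
  then have "m j = 0 \<Longrightarrow> meas_weight \<rho> V j = 0" for j
    using sum_rel_term_eq_infinity[of "meas_weight \<rho> V" j "meas_weight \<sigma> V"]
      meas_weight_eigenbasis[where l = m, OF V ev] by auto
  then have kernel: "m j = 0 \<Longrightarrow> \<rho> *v column j V = 0" for j
    using psd_op_qform_eq_0_imp_kernel[OF \<rho>] by (simp add: meas_weight_def)
  fix x
  assume "x \<in> op_support \<rho>"
  then obtain y where x: "x = \<rho> *v y"
    by (auto simp: op_support_def)
  define c where "c = cadj V *v x"
  have c0: "c $ j = 0" if "m j = 0" for j
  proof -
    have "c $ j = cinner (\<rho> *v column j V) y"
      using \<rho> by (simp add: c_def cadj_matrix_vector_mult_nth x hermitian_op_cinner psd_op_def)
    then show ?thesis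
      by (simp add: kernel[OF that])
  qed
  define w where "w = (\<chi> j. if m j = 0 then 0 else c $ j / complex_of_real (m j))"
  have "cdiag m *v w = c"
    by (simp add: cdiag_matrix_vector_mult w_def vec_eq_iff c0)
  then have "\<sigma> *v (V *v w) = x"
    unfolding \<sigma>_eq
    by (simp add: unitary_op_cadj_matrix_vector_mult[OF V] unitary_op_matrix_vector_mult_cadj[OF V] c_def
        flip: matrix_vector_mul_assoc)
  then show "x \<in> op_support \<sigma>"
    unfolding op_support_def by (metis rangeI)
qed

lemma compact_unitary_ops: "compact {U::complex^'n^'n. unitary_op U}"
  unfolding compact_eq_bounded_closed
proof
  have "norm U \<le> real (CARD('n) * CARD('n))" if U: "unitary_op U" for U :: "complex^'n^'n"
  proof -
    have "norm (U $ a $ j) \<le> 1" for a j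
    proof -
      have "(norm (column j U))\<^sup>2 = 1"
        using unitary_op_column_unit[OF U, of j] Re_cinner_self[of "column j U"] by simp
      then have "norm (column j U) = 1"
        using power2_eq_1_iff[of "norm (column j U)"] norm_ge_zero[of "column j U"] by linarith
      then show ?thesis
        using Finite_Cartesian_Product.norm_nth_le[of "column j U" a] by (simp add: column_def)
    qed
    have "norm U \<le> (\<Sum>a\<in>UNIV. norm (U $ a))"
      by (simp add: norm_vec_def L2_set_le_sum)
    also have "\<dots> \<le> (\<Sum>a\<in>UNIV. \<Sum>j\<in>UNIV. norm (U $ a $ j))"
      by (intro sum_mono) (simp add: norm_vec_def L2_set_le_sum)
    also have "\<dots> \<le> (\<Sum>a\<in>(UNIV::'n set). \<Sum>j\<in>(UNIV::'n set). 1)"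
      using \<open>\<And>a j. norm (U $ a $ j) \<le> 1\<close> by (intro sum_mono)
    finally show ?thesis
      by simp
  qed
  then show "bounded {U::complex^'n^'n. unitary_op U}"
    unfolding bounded_iff by blast
next
  have unitary_eq: "{U::complex^'n^'n. unitary_op U} =
          (\<Inter>i. \<Inter>j. {U. (\<Sum>a\<in>UNIV. cnj (U$a$i) * U$a$j) = (if i = j then 1 else 0)})"
    unfolding unitary_op_iff_orthonormal_columns by (auto simp: cinner_def column_def)
  show "closed {U::complex^'n^'n. unitary_op U}"
    unfolding unitary_eq
    by (intro closed_INT ballI closed_Collect_eq continuous_on_sum continuous_on_mult continuous_on_cnj
        continuous_on_component continuous_on_id continuous_on_const)
qed

lemma proj_meas_rel_ent_attained:
  fixes \<rho> \<sigma> :: "complex^'n^'n"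
  assumes \<rho>: "pd_op \<rho>" and \<sigma>: "pd_op \<sigma>"
  shows "\<exists>U. unitary_op U \<and> proj_meas_rel_ent \<rho> \<sigma> =
           ereal (\<Sum>j\<in>UNIV. meas_weight \<rho> U j * ln (meas_weight \<rho> U j / meas_weight \<sigma> U j))"
proof -
  define g where "g U = (\<Sum>j\<in>UNIV. meas_weight \<rho> U j * ln (meas_weight \<rho> U j / meas_weight \<sigma> U j))" for U
  have rel_ent_eq: "(\<Sum>j\<in>UNIV. rel_term (meas_weight \<rho> U j) (meas_weight \<sigma> U j)) = ereal (g U)"
    if "unitary_op U" for U
    using meas_weight_pos[OF \<rho> that] meas_weight_pos[OF \<sigma> that]
    by (subst sum_rel_term_eq_ereal) (auto simp: g_def less_imp_neq[symmetric])
  have weight_cont: "continuous_on S (\<lambda>U::complex^'n^'n. meas_weight R U j)" for S R j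
    unfolding meas_weight_def qform_def column_def vec_lambda_beta
    by (intro continuous_on_Re continuous_on_sum continuous_on_mult continuous_on_cnj
        continuous_on_component continuous_on_id continuous_on_const)
  have "continuous_on {U. unitary_op U} g"
    unfolding g_def using meas_weight_pos[OF \<rho>] meas_weight_pos[OF \<sigma>]
    by (intro continuous_on_sum continuous_on_mult continuous_on_ln continuous_on_divide weight_cont ballI)
      (auto simp: less_imp_neq[symmetric])
  moreover have "{U::complex^'n^'n. unitary_op U} \<noteq> {}"
    using unitary_op_mat_1 by blast
  ultimately obtain U0 where U0: "unitary_op U0" and max: "\<And>U. unitary_op U \<Longrightarrow> g U \<le> g U0"
    using continuous_attains_sup[OF compact_unitary_ops] by blast
  have "proj_meas_rel_ent \<rho> \<sigma> = ereal (g U0)"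
    unfolding proj_meas_rel_ent_eq_SUP_unitary
  proof (rule antisym)
    show "(SUP U\<in>{U. unitary_op U}. \<Sum>j\<in>UNIV. rel_term (meas_weight \<rho> U j) (meas_weight \<sigma> U j)) \<le> ereal (g U0)"
      using max by (intro SUP_least) (simp add: rel_ent_eq)
    show "ereal (g U0) \<le> (SUP U\<in>{U. unitary_op U}. \<Sum>j\<in>UNIV. rel_term (meas_weight \<rho> U j) (meas_weight \<sigma> U j))"
      unfolding rel_ent_eq[OF U0, symmetric] by (rule SUP_upper) (simp add: U0)
  qed
  with U0 show ?thesis
    unfolding g_def by blast
qed

lemma variational_attained:
  fixes \<rho> \<sigma> :: "complex^'n^'n"
  assumes \<rho>: "density_op \<rho>" "pd_op \<rho>" and \<sigma>: "pd_op \<sigma>"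
  shows "\<exists>\<omega>. pd_op \<omega> \<and> proj_meas_rel_ent \<rho> \<sigma> = ereal (Re (trace (\<rho> ** op_log \<omega>)) - ln (Re (trace (\<sigma> ** \<omega>))))
           \<and> proj_meas_rel_ent \<rho> \<sigma> = ereal (Re (trace (\<rho> ** op_log \<omega>)) + 1 - Re (trace (\<sigma> ** \<omega>)))"
proof -
  obtain U where U: "unitary_op U" and D: "proj_meas_rel_ent \<rho> \<sigma> =
      ereal (\<Sum>j\<in>UNIV. meas_weight \<rho> U j * ln (meas_weight \<rho> U j / meas_weight \<sigma> U j))"
    using proj_meas_rel_ent_attained[OF \<rho>(2) \<sigma>] by blast
  define \<mu> where "\<mu> j = meas_weight \<rho> U j / meas_weight \<sigma> U j" for j
  have \<mu>: "\<And>j. 0 < \<mu> j"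
    using meas_weight_pos[OF \<rho>(2) U] meas_weight_pos[OF \<sigma> U] by (simp add: \<mu>_def)
  define \<omega> where "\<omega> = U ** cdiag \<mu> ** cadj U"
  have "pd_op \<omega>"
    unfolding \<omega>_def by (rule pd_op_unitary_diag[OF U \<mu>])
  moreover have "Re (trace (\<rho> ** op_log \<omega>)) = (\<Sum>j\<in>UNIV. meas_weight \<rho> U j * ln (\<mu> j))"
    unfolding \<omega>_def by (rule Re_trace_mult_op_log_unitary_diag[OF U \<mu>])
  moreover have "Re (trace (\<sigma> ** \<omega>)) = (\<Sum>j\<in>UNIV. meas_weight \<rho> U j)"
    unfolding \<omega>_def Re_trace_mult_unitary_diag
    using meas_weight_pos[OF \<sigma> U] by (intro sum.cong) (auto simp: \<mu>_def less_imp_neq[symmetric])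
  moreover have "(\<Sum>j\<in>UNIV. meas_weight \<rho> U j) = 1"
    using \<rho>(1) U by (simp add: sum_meas_weight density_op_def)
  ultimately show ?thesis
    using D by (intro exI[of _ \<omega>]) (simp add: \<mu>_def)
qed

theorem lemma1:
  fixes \<rho> \<sigma> :: "complex^'n^'n"
  assumes "density_op \<rho>" and "psd_op \<sigma>" and "\<sigma> \<noteq> 0"
  shows "proj_meas_rel_ent \<rho> \<sigma> =
           (SUP \<omega>\<in>{\<omega>. pd_op \<omega>}. ereal (Re (trace (\<rho> ** op_log \<omega>)) - ln (Re (trace (\<sigma> ** \<omega>)))))
     \<and> proj_meas_rel_ent \<rho> \<sigma> =
           (SUP \<omega>\<in>{\<omega>. pd_op \<omega>}. ereal (Re (trace (\<rho> ** op_log \<omega>)) + 1 - Re (trace (\<sigma> ** \<omega>))))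
     \<and> (\<not> op_support \<rho> \<subseteq> op_support \<sigma> \<longrightarrow> proj_meas_rel_ent \<rho> \<sigma> = \<infinity>)
     \<and> (pd_op \<rho> \<and> pd_op \<sigma> \<longrightarrow>
           (\<exists>\<omega>. pd_op \<omega> \<and> proj_meas_rel_ent \<rho> \<sigma> =
              ereal (Re (trace (\<rho> ** op_log \<omega>)) - ln (Re (trace (\<sigma> ** \<omega>)))))
         \<and> (\<exists>\<omega>. pd_op \<omega> \<and> proj_meas_rel_ent \<rho> \<sigma> =
              ereal (Re (trace (\<rho> ** op_log \<omega>)) + 1 - Re (trace (\<sigma> ** \<omega>)))))"
proof -
  let ?D = "proj_meas_rel_ent \<rho> \<sigma>"
  let ?log = "\<lambda>\<omega>. ereal (Re (trace (\<rho> ** op_log \<omega>)) - ln (Re (trace (\<sigma> ** \<omega>))))"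
  let ?lin = "\<lambda>\<omega>. ereal (Re (trace (\<rho> ** op_log \<omega>)) + 1 - Re (trace (\<sigma> ** \<omega>)))"
  have "?lin \<omega> \<le> ?log \<omega>" if "pd_op \<omega>" for \<omega>
    using ln_le_minus_one[OF Re_trace_mult_pd_op_pos[OF assms(2,3) that]] by simp
  then have lin_log: "(SUP \<omega>\<in>{\<omega>. pd_op \<omega>}. ?lin \<omega>) \<le> (SUP \<omega>\<in>{\<omega>. pd_op \<omega>}. ?log \<omega>)"
    by (intro SUP_mono) auto
  have log_D: "(SUP \<omega>\<in>{\<omega>. pd_op \<omega>}. ?log \<omega>) \<le> ?D"
    using log_variational_le_proj_meas_rel_ent[OF assms] by (intro SUP_least) simp
  have D_lin: "?D \<le> (SUP \<omega>\<in>{\<omega>. pd_op \<omega>}. ?lin \<omega>)"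
    using assms(1,2) by (rule proj_meas_rel_ent_le_linear_variational)
  have "?D = (SUP \<omega>\<in>{\<omega>. pd_op \<omega>}. ?log \<omega>)"
    using order_trans[OF D_lin lin_log] log_D by (rule antisym)
  moreover have "?D = (SUP \<omega>\<in>{\<omega>. pd_op \<omega>}. ?lin \<omega>)"
    using D_lin order_trans[OF lin_log log_D] by (rule antisym)
  moreover have "\<not> op_support \<rho> \<subseteq> op_support \<sigma> \<longrightarrow> ?D = \<infinity>"
    using assms(1,2) support_subset_if_proj_meas_rel_ent_finite by (auto simp: density_op_def)
  ultimately show ?thesis
    using variational_attained[OF assms(1)] by blast
qed

end
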